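(* Let $s=\tfrac12$ and $\lambda\in\mathbb{C}$. The only odd superderivation of $\mathfrak{L}^{1/2}_\lambda$ of degree $0$ is the zero map; in particular it coincides with the (zero) space of odd inner derivations of degree $0$.
   Context: For $s\in\{0,\tfrac12\}$ and $\lambda\in\mathbb{C}$, $\mathfrak{L}^s_\lambda$ is the complex Lie superalgebra with basis $\{L_m,I_m,G_p,H_p : m\in\mathbb{Z},\ p\in s+\mathbb{Z}\}$, even part spanned by the $L_m,I_m$, odd part spanned by the $G_p,H_p$, with brackets $[L_m,L_n]=(m-n)L_{m+n}$, $[L_m,I_n]=(m-n)I_{m+n}$, $[L_m,H_p]=(\tfrac m2-p)H_{m+p}$, $[L_m,G_p]=(\tfrac m2-p)G_{m+p}+\lambda(m+1)H_{m+p}$, $[I_m,G_p]=(m-2p)H_{m+p}$, $[G_p,G_q]=I_{p+q}$, plus super-antisymmetry; other brackets of basis elements are zero. $\mathfrak{L}_r$ is spanned by basis elements of index $r$. A superderivation of parity $a$ is a linear map shifting parity by $a$ and satisfying $D([x,y])=[D(x),y]+(-1)^{a|x|}[x,D(y)]$; it has degree $r$ if $D(\mathfrak{L}_q)\subset\mathfrak{L}_{q+r}$. *)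

theory Defs
  imports Complex_Main
begin

text \<open>Basis of the Lie superalgebra L^s_lambda for s = 1/2.
  Convention: G k and H k stand for G_p and H_p with p = k + 1/2 (k an integer),
  so that the odd indices range over 1/2 + Z.\<close>

datatype sbasis = L int | I int | G int | H int

fun sdeg :: "sbasis \<Rightarrow> rat" where
  "sdeg (L m) = of_int m"
| "sdeg (I m) = of_int m"
| "sdeg (G k) = of_int k + 1/2"
| "sdeg (H k) = of_int k + 1/2"

fun sodd :: "sbasis \<Rightarrow> bool" where
  "sodd (L _) = False"
| "sodd (I _) = False"
| "sodd (G _) = True"
| "sodd (H _) = True"

definition single :: "sbasis \<Rightarrow> complex \<Rightarrow> sbasis \<Rightarrow> complex" where
  "single b c = (\<lambda>x. if x = b then c else 0)"

fun bb :: "complex \<Rightarrow> sbasis \<Rightarrow> sbasis \<Rightarrow> sbasis \<Rightarrow> complex" where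
  "bb lam (L m) (L n) = single (L (m + n)) (of_int (m - n))"
| "bb lam (L m) (I n) = single (I (m + n)) (of_int (m - n))"
| "bb lam (I n) (L m) = single (I (m + n)) (- of_int (m - n))"
| "bb lam (L m) (H k) = single (H (m + k)) (of_int m / 2 - (of_int k + 1/2))"
| "bb lam (H k) (L m) = single (H (m + k)) (- (of_int m / 2 - (of_int k + 1/2)))"
| "bb lam (L m) (G k) = (\<lambda>x. single (G (m + k)) (of_int m / 2 - (of_int k + 1/2)) x
                             + single (H (m + k)) (lam * of_int (m + 1)) x)"
| "bb lam (G k) (L m) = (\<lambda>x. - (single (G (m + k)) (of_int m / 2 - (of_int k + 1/2)) x
                             + single (H (m + k)) (lam * of_int (m + 1)) x))"
| "bb lam (I m) (G k) = single (H (m + k)) (of_int m - 2 * (of_int k + 1/2))"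
| "bb lam (G k) (I m) = single (H (m + k)) (- (of_int m - 2 * (of_int k + 1/2)))"
| "bb lam (G k) (G l) = single (I (k + l + 1)) 1"
| "bb lam _ _ = (\<lambda>x. 0)"

text \<open>Elements of the superalgebra: finitely supported coefficient functions.\<close>
definition ssupp :: "(sbasis \<Rightarrow> complex) \<Rightarrow> sbasis set" where
  "ssupp f = {b. f b \<noteq> 0}"

definition scarrier :: "(sbasis \<Rightarrow> complex) set" where
  "scarrier = {f. finite (ssupp f)}"

definition sbrk :: "complex \<Rightarrow> (sbasis \<Rightarrow> complex) \<Rightarrow> (sbasis \<Rightarrow> complex) \<Rightarrow> (sbasis \<Rightarrow> complex)" where
  "sbrk lam f g = (\<lambda>c. \<Sum>a\<in>ssupp f. \<Sum>b\<in>ssupp g. f a * g b * bb lam a b c)"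

definition homog_par :: "bool \<Rightarrow> (sbasis \<Rightarrow> complex) \<Rightarrow> bool" where
  "homog_par a x \<longleftrightarrow> x \<in> scarrier \<and> (\<forall>b\<in>ssupp x. sodd b = a)"

definition in_deg :: "rat \<Rightarrow> (sbasis \<Rightarrow> complex) \<Rightarrow> bool" where
  "in_deg q x \<longleftrightarrow> x \<in> scarrier \<and> (\<forall>b\<in>ssupp x. sdeg b = q)"

definition slinear :: "((sbasis \<Rightarrow> complex) \<Rightarrow> (sbasis \<Rightarrow> complex)) \<Rightarrow> bool" where
  "slinear D \<longleftrightarrow> (\<forall>x\<in>scarrier. D x \<in> scarrier)
     \<and> (\<forall>x\<in>scarrier. \<forall>y\<in>scarrier. D (\<lambda>b. x b + y b) = (\<lambda>b. D x b + D y b))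
     \<and> (\<forall>c. \<forall>x\<in>scarrier. D (\<lambda>b. c * x b) = (\<lambda>b. c * D x b))"

definition odd_superderivation :: "complex \<Rightarrow> ((sbasis \<Rightarrow> complex) \<Rightarrow> (sbasis \<Rightarrow> complex)) \<Rightarrow> bool" where
  "odd_superderivation lam D \<longleftrightarrow> slinear D
     \<and> (\<forall>a x. homog_par a x \<longrightarrow> homog_par (\<not> a) (D x))
     \<and> (\<forall>a x y. homog_par a x \<longrightarrow> (\<exists>a'. homog_par a' y) \<longrightarrow>
          D (sbrk lam x y) = (\<lambda>c. sbrk lam (D x) y c + (if a then -1 else 1) * sbrk lam x (D y) c))"

definition has_degree :: "rat \<Rightarrow> ((sbasis \<Rightarrow> complex) \<Rightarrow> (sbasis \<Rightarrow> complex)) \<Rightarrow> bool" where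
  "has_degree r D \<longleftrightarrow> (\<forall>q x. in_deg q x \<longrightarrow> in_deg (q + r) (D x))"

end

theory Submission
  imports Defs
begin

text \<open>Even basis elements have integer degree and odd ones half-integer degree, so an odd map of
  degree 0 sends every basis vector into a homogeneous component that has no nonzero elements of
  the required parity; by linearity it vanishes everywhere. For the same reason the odd part of
  degree 0 is zero, so the only odd inner derivation of degree 0 is the zero map.\<close>

lemma of_int_ne_of_int_plus_half: "(of_int m :: rat) \<noteq> of_int k + 1/2"
proof
  assume "(of_int m :: rat) = of_int k + 1/2"
  then have "(of_int (2*m) :: rat) = of_int (2*k + 1)" by simp
  then have "2*m = 2*k + 1" by (simp only: of_int_eq_iff)
  then show False by presburger
qed

lemma sodd_eq_if_sdeg_eq: "sdeg b = sdeg c \<Longrightarrow> sodd b = sodd c"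
  by (cases b; cases c) (auto dest: sym of_int_ne_of_int_plus_half[THEN notE])

lemma in_deg_homog_par_opposite_eq_zero:
  assumes "in_deg (sdeg b) x" and "homog_par (\<not> sodd b) x"
  shows "x = (\<lambda>_. 0)"
proof
  fix c
  show "x c = 0"
  proof (rule ccontr)
    assume "x c \<noteq> 0"
    then have "sdeg c = sdeg b" and "sodd c = (\<not> sodd b)"
      using assms by (auto simp: in_deg_def homog_par_def ssupp_def)
    then show False using sodd_eq_if_sdeg_eq by blast
  qed
qed

lemma single_in_scarrier: "single b c \<in> scarrier"
proof -
  have "ssupp (single b c) \<subseteq> {b}" by (auto simp: ssupp_def single_def)
  then show ?thesis unfolding scarrier_def by (auto intro: finite_subset)
qed

lemma zero_in_scarrier: "(\<lambda>_. 0) \<in> scarrier"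
  by (simp add: scarrier_def ssupp_def)

lemma sum_single_in_scarrier:
  assumes "finite S"
  shows "(\<lambda>x. \<Sum>b\<in>S. single b (c b) x) \<in> scarrier"
proof -
  have "ssupp (\<lambda>x. \<Sum>b\<in>S. single b (c b) x) \<subseteq> S"
    using assms by (auto simp: ssupp_def single_def)
  then show ?thesis using assms unfolding scarrier_def by (auto intro: finite_subset)
qed

lemma sum_single_ssupp:
  assumes "y \<in> scarrier"
  shows "(\<lambda>x. \<Sum>b\<in>ssupp y. single b (y b) x) = y"
proof
  fix x
  have "finite (ssupp y)" using assms by (simp add: scarrier_def)
  then show "(\<Sum>b\<in>ssupp y. single b (y b) x) = y x"
    by (simp add: single_def sum.delta' ssupp_def)
qed

lemma slinear_add:
  "slinear D \<Longrightarrow> x \<in> scarrier \<Longrightarrow> y \<in> scarrier \<Longrightarrow> D (\<lambda>b. x b + y b) = (\<lambda>b. D x b + D y b)"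
  unfolding slinear_def by blast

lemma slinear_scale: "slinear D \<Longrightarrow> x \<in> scarrier \<Longrightarrow> D (\<lambda>b. c * x b) = (\<lambda>b. c * D x b)"
  unfolding slinear_def by blast

lemma slinear_zero:
  assumes "slinear D"
  shows "D (\<lambda>_. 0) = (\<lambda>_. 0)"
  using slinear_scale[OF assms zero_in_scarrier, of 0] by simp

lemma slinear_sum_single:
  assumes "slinear D" and "finite S"
  shows "D (\<lambda>x. \<Sum>b\<in>S. single b (c b) x) = (\<lambda>x. \<Sum>b\<in>S. c b * D (single b 1) x)"
  using assms(2)
proof (induction S rule: finite_induct)
  case empty
  show ?case using slinear_zero[OF assms(1)] by simp
next
  case (insert a S)
  have scale: "D (single a (c a)) = (\<lambda>x. c a * D (single a 1) x)"
  proof -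
    have "single a (c a) = (\<lambda>x. c a * single a 1 x)" by (auto simp: single_def)
    then show ?thesis using slinear_scale[OF assms(1) single_in_scarrier] by simp
  qed
  have "D (\<lambda>x. \<Sum>b\<in>insert a S. single b (c b) x)
      = D (\<lambda>x. (\<Sum>b\<in>S. single b (c b) x) + single a (c a) x)"
    using insert by (simp add: add.commute)
  also have "\<dots> = (\<lambda>x. D (\<lambda>x. \<Sum>b\<in>S. single b (c b) x) x + D (single a (c a)) x)"
    by (rule slinear_add[OF assms(1) sum_single_in_scarrier[OF insert(1)] single_in_scarrier])
  finally show ?case using insert by (simp add: scale add.commute)
qed

lemma slinear_eq_zero_if_zero_on_basis:
  assumes "slinear D" and "\<And>b. D (single b 1) = (\<lambda>_. 0)" and "y \<in> scarrier"
  shows "D y = (\<lambda>_. 0)"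
  using slinear_sum_single[OF assms(1), of "ssupp y" y] sum_single_ssupp[OF assms(3)]
    assms(2,3) by (simp add: scarrier_def)

lemma odd_superderivation_degree_zero_basis:
  assumes "odd_superderivation lam D" and "has_degree 0 D"
  shows "D (single b 1) = (\<lambda>_. 0)"
proof (rule in_deg_homog_par_opposite_eq_zero)
  have "homog_par (sodd b) (single b 1)"
    using single_in_scarrier by (auto simp: homog_par_def ssupp_def single_def)
  then show "homog_par (\<not> sodd b) (D (single b 1))"
    using assms(1) unfolding odd_superderivation_def by blast
  have "in_deg (sdeg b) (single b 1)"
    using single_in_scarrier by (auto simp: in_deg_def ssupp_def single_def)
  then show "in_deg (sdeg b) (D (single b 1))"
    using assms(2) unfolding has_degree_def by force
qed

lemma odd_degree_zero_eq_zero: "homog_par True x \<Longrightarrow> in_deg 0 x \<Longrightarrow> x = (\<lambda>_. 0)"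
  using in_deg_homog_par_opposite_eq_zero[of "L 0" x] by simp

lemma sbrk_zero_left: "sbrk lam (\<lambda>_. 0) y = (\<lambda>_. 0)"
  by (simp add: sbrk_def ssupp_def)

theorem lemma2p9:
  fixes lam :: complex
    and D :: "(sbasis \<Rightarrow> complex) \<Rightarrow> (sbasis \<Rightarrow> complex)"
  assumes "odd_superderivation lam D" and "has_degree 0 D"
  shows "(\<forall>y\<in>scarrier. D y = (\<lambda>b. 0))
    \<and> (\<forall>x. homog_par True x \<and> in_deg 0 x \<longrightarrow> (\<forall>y\<in>scarrier. sbrk lam x y = (\<lambda>b. 0)))
    \<and> (\<exists>x. homog_par True x \<and> in_deg 0 x \<and> (\<forall>y\<in>scarrier. D y = sbrk lam x y))"
proof -
  have lin: "slinear D" using assms(1) by (simp add: odd_superderivation_def)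
  have D_zero: "\<forall>y\<in>scarrier. D y = (\<lambda>_. 0)"
    using slinear_eq_zero_if_zero_on_basis[OF lin odd_superderivation_degree_zero_basis[OF assms]]
    by blast
  have zero_odd_deg0: "homog_par True (\<lambda>_. 0) \<and> in_deg 0 (\<lambda>_. 0)"
    using zero_in_scarrier by (simp add: homog_par_def in_deg_def ssupp_def)
  show ?thesis
    using D_zero zero_odd_deg0 odd_degree_zero_eq_zero sbrk_zero_left by metis
qed

end
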